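(* Let $p>1$, $\beta=1/(p-1)$, $\gamma=\frac{p-2}{2(p-1)}$, $\sigma\in\{-1,1\}$, and $A>0$. Let $\phi\in C^2([A,\infty))$ be a solution of $$\sigma\phi''=\tfrac12 y\phi'-\gamma\phi-|\phi'|^p\quad\text{on }[A,\infty)$$ such that, for some $C>0$, $\phi'(y)\ge Cy^\beta$ for all $y\ge A$, and $|\phi''(y)|=o(y^{\beta+1})$ as $y\to\infty$. Then $$\lim_{y\to\infty}\frac{\phi(y)}{y^{\beta+1}}=L:=\frac{p^{-\beta}}{\beta+1}.$$ *)

theory Defs
  imports "HOL-Analysis.Analysis"
begin

end

theory Submission
  imports Defs
begin

(* With w = \<phi>'/y^\<beta> and v = (\<beta>+1)\<phi>/y^(\<beta>+1) the equation becomes the first-order relation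
   y v' = (\<beta>+1)(w - v) together with the algebraic relation \<sigma>\<phi>''/y^(\<beta>+1) = F(w, v), whose left
   side tends to 0. On the diagonal F(v, v) = v/p - v^p vanishes only at the equilibrium
   v = p^(-\<beta>). If v \<ge> T for some T above the equilibrium, F(w, v) \<approx> 0 forces w below v by a
   fixed fraction of v, so v decreases at least like -c ln y and cannot stay above T. Below the
   equilibrium (and above C/2, below which w \<ge> C pushes v up) w keeps a fixed distance from v. It
   cannot be below v: then v decreases, w - v cannot cross the forbidden band by continuity, and v
   would decrease logarithmically forever. So w lies above v and v rises past every T below the
   equilibrium. *)

lemma powr_above_tangent:
  fixes a b p :: real
  assumes "1 \<le> p" "0 < a" "0 < b"
  shows "a powr p + p * a powr (p - 1) * (b - a) \<le> b powr p"
proof -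
  have "p * a powr (p - 1) * (b - a) \<le> b powr p - a powr p"
    by (rule convex_on_imp_above_tangent[OF powr_convex[OF assms(1)]])
      (use assms in \<open>auto intro!: derivative_eq_intros simp: interior_open\<close>)
  then show ?thesis by simp
qed

lemma powr_eq_mult_powr_minus_1:
  fixes x p :: real
  assumes "0 < x"
  shows "x powr p = x * x powr (p - 1)"
  using powr_mult_base[of x "p - 1"] assms by simp

lemma powr_equilibrium:
  fixes p :: real
  assumes "1 < p"
  shows "(p powr (- (1 / (p - 1)))) powr (p - 1) = 1 / p"
proof -
  have "- (1 / (p - 1)) * (p - 1) = -1"
    using assms by simp
  then have "(p powr (- (1 / (p - 1)))) powr (p - 1) = p powr -1"
    by (simp only: powr_powr)
  then show ?thesis
    using assms by (simp add: powr_minus_divide)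
qed

lemma DERIV_nonpos_above_imp_le:
  fixes f f' :: "real \<Rightarrow> real"
  assumes "a \<le> b" and deriv: "\<And>x. a \<le> x \<Longrightarrow> x \<le> b \<Longrightarrow> (f has_real_derivative f' x) (at x)"
    and nonpos: "\<And>x. a < x \<Longrightarrow> x < b \<Longrightarrow> T < f x \<Longrightarrow> f' x \<le> 0"
    and "f a \<le> T"
  shows "f b \<le> T"
proof (rule ccontr)
  assume "\<not> f b \<le> T"
  define S where "S = {x \<in> {a..b}. f x \<le> T}"
  have "continuous_on {a..b} f"
    using deriv by (meson DERIV_isCont atLeastAtMost_iff continuous_at_imp_continuous_on)
  then have "closed S" unfolding S_def
    by (rule continuous_on_closed_Collect_le[OF _ continuous_on_const closed_atLeastAtMost])
  moreover have "a \<in> S" "bdd_above S"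
    using assms by (auto simp: S_def bdd_above_def)
  ultimately have "Sup S \<in> S"
    using closed_contains_Sup by blast
  then have s: "a \<le> Sup S" "f (Sup S) \<le> T" "Sup S < b"
    using \<open>\<not> f b \<le> T\<close> by (auto simp: S_def order_le_less)
  then obtain z where z: "Sup S < z" "z < b" "f b - f (Sup S) = (b - Sup S) * f' z"
    using MVT2[of "Sup S" b f f'] deriv by auto
  have "z \<notin> S"
    using z(1) cSup_upper[OF _ \<open>bdd_above S\<close>] by fastforce
  then have "f' z \<le> 0"
    using z s by (intro nonpos) (auto simp: S_def)
  then have "(b - Sup S) * f' z \<le> 0"
    using z by (simp add: mult_nonneg_nonpos)
  then show False
    using z s \<open>\<not> f b \<le> T\<close> by linarith
qed

lemma DERIV_le_neg_inverse_imp_log_decay: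
  fixes f f' :: "real \<Rightarrow> real"
  assumes "0 < Y" and deriv: "\<And>x. Y \<le> x \<Longrightarrow> (f has_real_derivative f' x) (at x)"
    and decay: "\<And>x. Y \<le> x \<Longrightarrow> f' x \<le> - \<eta> / x" and "Y \<le> y"
  shows "f y + \<eta> * ln y \<le> f Y + \<eta> * ln Y"
proof (rule DERIV_nonpos_imp_nonincreasing[OF \<open>Y \<le> y\<close>])
  fix x assume x: "Y \<le> x" "x \<le> y"
  have "((\<lambda>x. f x + \<eta> * ln x) has_real_derivative f' x + \<eta> * (1 / x)) (at x)"
    using x assms by (auto intro!: derivative_eq_intros deriv)
  moreover have "f' x + \<eta> * (1 / x) \<le> 0"
    using decay[OF x(1)] by simp
  ultimately show "\<exists>D. ((\<lambda>x. f x + \<eta> * ln x) has_real_derivative D) (at x) \<and> D \<le> 0"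
    by blast
qed

lemma eventually_le_if_deriv_le_neg_inverse:
  fixes f f' :: "real \<Rightarrow> real"
  assumes "0 < Y" "0 < \<eta>"
    and deriv: "\<And>y. Y \<le> y \<Longrightarrow> (f has_real_derivative f' y) (at y)"
    and decay: "\<And>y. Y \<le> y \<Longrightarrow> T \<le> f y \<Longrightarrow> f' y \<le> - \<eta> / y"
  shows "eventually (\<lambda>y. f y \<le> T) at_top"
proof (cases "\<exists>a\<ge>Y. f a \<le> T")
  case True
  then obtain a where a: "Y \<le> a" "f a \<le> T" by blast
  have "f y \<le> T" if "a \<le> y" for y
  proof (rule DERIV_nonpos_above_imp_le[OF that, of f f'])
    fix x assume "a < x" "x < y" "T < f x"
    then have "f' x \<le> - \<eta> / x" using a by (intro decay) auto
    also have "\<dots> \<le> 0" using assms a \<open>a < x\<close> by simp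
    finally show "f' x \<le> 0" .
  qed (use a deriv in auto)
  then show ?thesis unfolding eventually_at_top_linorder by blast
next
  case False
  have log_decay: "f y + \<eta> * ln y \<le> f Y + \<eta> * ln Y" if "Y \<le> y" for y
    using False that assms by (intro DERIV_le_neg_inverse_imp_log_decay[of Y f f']) force+
  have "eventually (\<lambda>y. (f Y + \<eta> * ln Y - T) / \<eta> < ln y) at_top"
    using ln_at_top filterlim_at_top_dense by blast
  moreover have "eventually (\<lambda>y. Y \<le> y) at_top"
    by (rule eventually_ge_at_top)
  ultimately have "eventually (\<lambda>y. f y < T) at_top"
  proof eventually_elim
    case (elim y)
    then have "f Y + \<eta> * ln Y - T < \<eta> * ln y"
      using \<open>0 < \<eta>\<close> by (simp add: pos_divide_less_eq mult.commute)
    with log_decay[OF \<open>Y \<le> y\<close>] show ?case by linarith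
  qed
  then show ?thesis by (rule eventually_mono) simp
qed

lemma eventually_ge_if_deriv_ge_pos_inverse:
  fixes f f' :: "real \<Rightarrow> real"
  assumes "0 < Y" "0 < \<eta>"
    and "\<And>y. Y \<le> y \<Longrightarrow> (f has_real_derivative f' y) (at y)"
    and "\<And>y. Y \<le> y \<Longrightarrow> f y \<le> T \<Longrightarrow> \<eta> / y \<le> f' y"
  shows "eventually (\<lambda>y. T \<le> f y) at_top"
proof -
  have "eventually (\<lambda>y. - f y \<le> - T) at_top"
    using assms
    by (intro eventually_le_if_deriv_le_neg_inverse[of Y \<eta> _ "\<lambda>y. - f' y"])
      (auto intro!: derivative_eq_intros)
  then show ?thesis by simp
qed

(* The function F above: \<sigma>\<phi>''/y^(\<beta>+1) written in terms of w and v (scaled_rhs_rescale). *)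
definition scaled_rhs :: "real \<Rightarrow> real \<Rightarrow> real \<Rightarrow> real" where
  "scaled_rhs p w v = w / 2 - w powr p - (p - 2) / (2 * p) * v"

lemma scaled_rhs_split:
  assumes "p \<noteq> 0"
  shows "scaled_rhs p w v = (w - v) / 2 - (w powr p - v powr p) + (v / p - v powr p)"
  using assms by (simp add: scaled_rhs_def field_simps)

lemma diagonal_le_above_equilibrium:
  fixes p T v :: real
  assumes p: "1 < p" and T: "0 < T" "T \<le> v"
  shows "v / p - v powr p \<le> - (1 - 1 / (p * T powr (p - 1))) * v powr p"
proof -
  have v: "0 < v"
    using T by simp
  have "v / p = v powr p / (p * v powr (p - 1))"
    using powr_eq_mult_powr_minus_1[OF v, of p] v p by simp
  also have "\<dots> \<le> v powr p / (p * T powr (p - 1))"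
    using T p by (intro divide_left_mono mult_left_mono powr_mono2) auto
  finally show ?thesis
    by (simp add: algebra_simps)
qed

lemma scaled_rhs_le_above_equilibrium:
  fixes p T v w \<eta> \<delta> :: real
  assumes p: "1 < p" and T: "0 < T" "T \<le> v" and w: "0 < w" "(1 - \<eta>) * v \<le> w"
    and \<delta>: "\<delta> = 1 - 1 / (p * T powr (p - 1))" "0 < \<delta>" and \<eta>: "0 \<le> \<eta>" "p * \<eta> \<le> \<delta> / 2"
  shows "scaled_rhs p w v \<le> - \<delta> / 2 * T powr p"
proof -
  have v: "0 < v" using T by simp
  have mono: "p * T powr (p - 1) \<le> p * v powr (p - 1)"
    using T p by (simp add: powr_mono2)
  have "0 < p * T powr (p - 1)"
    using T p by simp
  moreover have "1 / (p * T powr (p - 1)) < 1"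
    using \<delta> by linarith
  ultimately have slope: "1 < p * T powr (p - 1)"
    by (metis divide_less_eq_1_pos)
  define s where "s = p * v powr (p - 1)"
  have "v powr p + s * (w - v) \<le> w powr p"
    unfolding s_def using p v w by (intro powr_above_tangent) auto
  then have "(w - v) / 2 - (w powr p - v powr p) \<le> (v - w) * (s - 1 / 2)"
    by (simp add: field_simps)
  also have "\<dots> \<le> \<eta> * v * (s - 1 / 2)"
    using w mono slope by (intro mult_right_mono) (auto simp: s_def algebra_simps)
  also have "\<dots> \<le> \<eta> * v * s"
    using \<eta> v by (intro mult_left_mono) auto
  also have "\<dots> = p * \<eta> * v powr p"
    using powr_eq_mult_powr_minus_1[OF v, of p] by (simp add: s_def)
  finally have near: "(w - v) / 2 - (w powr p - v powr p) \<le> p * \<eta> * v powr p" .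
  have gap: "v / p - v powr p \<le> - \<delta> * v powr p"
    using diagonal_le_above_equilibrium[OF p T] \<delta> by simp
  have "scaled_rhs p w v \<le> p * \<eta> * v powr p + - \<delta> * v powr p"
    using add_mono[OF near gap] scaled_rhs_split[of p w v] p by simp
  also have "\<dots> = (p * \<eta> - \<delta>) * v powr p"
    by (simp add: algebra_simps)
  also have "\<dots> \<le> - \<delta> / 2 * v powr p"
    using \<eta> by (intro mult_right_mono) auto
  also have "\<dots> \<le> - \<delta> / 2 * T powr p"
    using T p \<delta> by (intro mult_left_mono_neg powr_mono2) auto
  finally show ?thesis .
qed

lemma scaled_rhs_ge_near_diagonal:
  fixes p m T v w \<eta> c :: real
  assumes p: "1 < p" and v: "0 < m" "m \<le> v" "v \<le> T" and T: "T powr (p - 1) < 1 / p"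
    and w: "0 < w" "\<bar>w - v\<bar> \<le> \<eta>" "\<eta> \<le> 1"
    and c: "c = m * (1 / p - T powr (p - 1))" "(1 / 2 + p * (T + 1) powr (p - 1)) * \<eta> \<le> c / 2"
  shows "c / 2 \<le> scaled_rhs p w v"
proof -
  have "w powr p + p * w powr (p - 1) * (v - w) \<le> v powr p"
    using p v w by (intro powr_above_tangent) auto
  then have "(w - v) * (1 / 2 - p * w powr (p - 1)) \<le> (w - v) / 2 - (w powr p - v powr p)"
    by (simp add: algebra_simps)
  moreover have "\<bar>1 / 2 - p * w powr (p - 1)\<bar> \<le> 1 / 2 + p * w powr (p - 1)"
    using p by (simp add: abs_le_iff)
  then have "\<bar>(w - v) * (1 / 2 - p * w powr (p - 1))\<bar> \<le> (1 / 2 + p * w powr (p - 1)) * \<bar>w - v\<bar>"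
    unfolding abs_mult by (metis abs_ge_zero mult.commute mult_left_mono)
  ultimately have "- ((1 / 2 + p * w powr (p - 1)) * \<bar>w - v\<bar>) \<le> (w - v) / 2 - (w powr p - v powr p)"
    by linarith
  moreover have "(1 / 2 + p * w powr (p - 1)) * \<bar>w - v\<bar> \<le> (1 / 2 + p * (T + 1) powr (p - 1)) * \<eta>"
    using p v w by (intro mult_mono add_left_mono mult_left_mono powr_mono2) auto
  moreover have "m * (1 / p - T powr (p - 1)) \<le> v * (1 / p - v powr (p - 1))"
    using p v T by (intro mult_mono) (auto simp: powr_mono2)
  then have "c \<le> v / p - v powr p"
    using c powr_eq_mult_powr_minus_1[of v p] v by (simp add: algebra_simps)
  ultimately show ?thesis
    using scaled_rhs_split[of p w v] p c by linarith
qed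

lemma scaled_rhs_rescale:
  fixes p y a b :: real
  assumes "1 < p" "0 < y" "0 \<le> b"
  defines "\<beta> \<equiv> 1 / (p - 1)"
  shows "scaled_rhs p (b / y powr \<beta>) ((\<beta> + 1) * a / y powr (\<beta> + 1))
       = (1 / 2 * y * b - (p - 2) / (2 * (p - 1)) * a - \<bar>b\<bar> powr p) / y powr (\<beta> + 1)"
proof -
  define P where "P = y powr \<beta>"
  have P: "0 < P" "y powr (\<beta> + 1) = y * P"
    using assms powr_mult_base[of y \<beta>] by (simp_all add: P_def add.commute)
  have "\<beta> * p = \<beta> + 1"
    using assms(1) by (simp add: \<beta>_def field_simps)
  then have "(b / P) powr p = \<bar>b\<bar> powr p / (y * P)"
    using assms P by (simp add: P_def powr_divide powr_powr)
  moreover have "(p - 2) / (2 * p) * ((\<beta> + 1) * a / (y * P)) = (p - 2) / (2 * (p - 1)) * a / (y * P)"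
    using assms(1,2) P by (simp add: \<beta>_def field_simps)
  ultimately have "scaled_rhs p (b / P) ((\<beta> + 1) * a / (y * P))
      = b / P / 2 - \<bar>b\<bar> powr p / (y * P) - (p - 2) / (2 * (p - 1)) * a / (y * P)"
    unfolding scaled_rhs_def by argo
  also have "\<dots> = (1 / 2 * y * b - (p - 2) / (2 * (p - 1)) * a - \<bar>b\<bar> powr p) / (y * P)"
    using assms P by (simp add: field_simps)
  finally show ?thesis
    by (simp add: P P_def)
qed

lemma has_real_derivative_rescaled:
  fixes f :: "real \<Rightarrow> real"
  assumes "0 < y" "(f has_real_derivative f') (at y)"
  shows "((\<lambda>x. (\<beta> + 1) * f x / x powr (\<beta> + 1)) has_real_derivative
           (\<beta> + 1) * (f' / y powr \<beta> - (\<beta> + 1) * f y / y powr (\<beta> + 1)) / y) (at y)"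
proof -
  have "y powr (\<beta> + 1) = y * y powr \<beta>"
    using assms powr_mult_base[of y \<beta>] by (simp add: add.commute)
  then show ?thesis
    using assms
    by (auto intro!: derivative_eq_intros simp: field_simps power2_eq_square)
qed

locale rescaled_profile =
  fixes p K A C :: real and v w :: "real \<Rightarrow> real"
  assumes p_gt_1: "1 < p" and K_pos: "0 < K" and A_pos: "0 < A" and C_pos: "0 < C"
    and v_deriv: "\<And>y. A < y \<Longrightarrow> (v has_real_derivative K * (w y - v y) / y) (at y)"
    and w_cont: "continuous_on {A<..} w"
    and w_ge_C: "\<And>y. A < y \<Longrightarrow> C \<le> w y"
    and scaled_rhs_tendsto_0: "((\<lambda>y. scaled_rhs p (w y) (v y)) \<longlongrightarrow> 0) at_top"
begin

lemma scaled_rhs_eventually_small: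
  assumes "0 < \<epsilon>"
  obtains Y where "A < Y" "\<And>y. Y \<le> y \<Longrightarrow> \<bar>scaled_rhs p (w y) (v y)\<bar> < \<epsilon>"
proof -
  have "eventually (\<lambda>y. A < y \<and> \<bar>scaled_rhs p (w y) (v y)\<bar> < \<epsilon>) at_top"
    using eventually_gt_at_top tendstoD[OF scaled_rhs_tendsto_0 assms]
    by (auto simp: dist_real_def intro: eventually_conj)
  then show ?thesis
    using that unfolding eventually_at_top_linorder by (metis order_refl)
qed

lemma eventually_le_if_gap_below:
  assumes "A < Y" "0 < \<eta>" and gap: "\<And>y. Y \<le> y \<Longrightarrow> T \<le> v y \<Longrightarrow> w y - v y \<le> - \<eta>"
  shows "eventually (\<lambda>y. v y \<le> T) at_top"
proof (rule eventually_le_if_deriv_le_neg_inverse)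
  show "0 < Y" "0 < K * \<eta>"
    using assms A_pos K_pos by auto
  fix y assume y: "Y \<le> y"
  then show "(v has_real_derivative K * (w y - v y) / y) (at y)"
    using assms by (intro v_deriv) auto
  assume "T \<le> v y"
  then have "K * (w y - v y) \<le> K * - \<eta>"
    using gap y K_pos by (intro mult_left_mono) auto
  then show "K * (w y - v y) / y \<le> - (K * \<eta>) / y"
    using y assms A_pos by (intro divide_right_mono) auto
qed

lemma eventually_ge_if_gap_above:
  assumes "A < Y" "0 < \<eta>" and gap: "\<And>y. Y \<le> y \<Longrightarrow> v y \<le> T \<Longrightarrow> \<eta> \<le> w y - v y"
  shows "eventually (\<lambda>y. T \<le> v y) at_top"
proof (rule eventually_ge_if_deriv_ge_pos_inverse)
  show "0 < Y" "0 < K * \<eta>"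
    using assms A_pos K_pos by auto
  fix y assume y: "Y \<le> y"
  then show "(v has_real_derivative K * (w y - v y) / y) (at y)"
    using assms by (intro v_deriv) auto
  assume "v y \<le> T"
  then have "K * \<eta> \<le> K * (w y - v y)"
    using gap y K_pos by (intro mult_left_mono) auto
  then show "K * \<eta> / y \<le> K * (w y - v y) / y"
    using y assms A_pos by (intro divide_right_mono) auto
qed

lemma eventually_le_above_equilibrium:
  assumes T: "0 < T" "1 / p < T powr (p - 1)"
  shows "eventually (\<lambda>y. v y \<le> T) at_top"
proof -
  define \<delta> where "\<delta> = 1 - 1 / (p * T powr (p - 1))"
  define \<eta> where "\<eta> = \<delta> / (2 * p)"
  have "1 < p * T powr (p - 1)"
    using T p_gt_1 by (simp add: field_simps)
  then have \<delta>: "0 < \<delta>"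
    by (simp add: \<delta>_def)
  then have \<eta>: "0 < \<eta>" "p * \<eta> = \<delta> / 2"
    using p_gt_1 by (simp_all add: \<eta>_def)
  obtain Y where Y: "A < Y" "\<And>y. Y \<le> y \<Longrightarrow> \<bar>scaled_rhs p (w y) (v y)\<bar> < \<delta> / 2 * T powr p"
    using scaled_rhs_eventually_small[of "\<delta> / 2 * T powr p"] \<delta> T by auto
  show ?thesis
  proof (rule eventually_le_if_gap_below[of Y "\<eta> * T"])
    fix y assume y: "Y \<le> y" "T \<le> v y"
    have "w y < (1 - \<eta>) * v y"
    proof (rule ccontr)
      assume "\<not> ?thesis"
      moreover have "0 < w y"
        using y Y w_ge_C[of y] C_pos by auto
      ultimately have "scaled_rhs p (w y) (v y) \<le> - \<delta> / 2 * T powr p"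
        using y p_gt_1 T \<delta> \<eta>
        by (intro scaled_rhs_le_above_equilibrium[of p T "v y" "w y" \<eta> \<delta>, OF _ _ _ _ _ \<delta>_def]) auto
      then show False
        using Y(2)[OF y(1)] by linarith
    qed
    moreover have "\<eta> * T \<le> \<eta> * v y"
      using y \<eta> by simp
    ultimately show "w y - v y \<le> - (\<eta> * T)"
      by (simp add: algebra_simps)
  qed (use Y \<eta> T in auto)
qed

lemma eventually_ge_half_C: "eventually (\<lambda>y. C / 2 \<le> v y) at_top"
proof (rule eventually_ge_if_gap_above[of "A + 1" "C / 2"])
  fix y assume "A + 1 \<le> y" "v y \<le> C / 2"
  then show "C / 2 \<le> w y - v y"
    using w_ge_C[of y] by simp
qed (use C_pos in simp_all)

lemma continuous_on_v: "continuous_on {A<..} v"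
  using v_deriv by (meson DERIV_isCont continuous_at_imp_continuous_on greaterThan_iff)

lemma gap_below_persists:
  assumes "A < Y" "0 < \<eta>" and gap: "\<And>y. Y \<le> y \<Longrightarrow> v y \<le> T \<Longrightarrow> \<eta> < \<bar>w y - v y\<bar>"
    and y0: "Y \<le> y0" "v y0 \<le> T" "w y0 - v y0 < - \<eta>" and "y0 \<le> y"
  shows "w y - v y < - \<eta>"
proof (rule ccontr)
  \<comment> \<open>At the first time s with w - v \<ge> -\<eta>, v has been decreasing, so v s \<le> T and the gap
     forces w s - v s > \<eta>; then w - v has a zero before s.\<close>
  assume contra: "\<not> w y - v y < - \<eta>"
  define g where "g t = w t - v t" for t
  define B where "B = {t \<in> {y0..y}. - \<eta> \<le> g t}"
  have "{y0..y} \<subseteq> {A<..}"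
    using assms by auto
  then have cont: "continuous_on {y0..y} g"
    unfolding g_def using w_cont continuous_on_v by (blast intro: continuous_on_diff continuous_on_subset)
  then have "closed B"
    unfolding B_def by (rule continuous_on_closed_Collect_le[OF continuous_on_const _ closed_atLeastAtMost])
  moreover have "y \<in> B" "bdd_below B"
    using contra \<open>y0 \<le> y\<close> by (auto simp: B_def g_def bdd_below_def)
  ultimately have "Inf B \<in> B"
    using closed_contains_Inf by blast
  define s where "s = Inf B"
  have s: "y0 \<le> s" "s \<le> y" "- \<eta> \<le> g s"
    using \<open>Inf B \<in> B\<close> by (auto simp: B_def s_def)
  have before_s: "g t < - \<eta>" if "y0 \<le> t" "t < s" for t
    using cInf_lower[OF _ \<open>bdd_below B\<close>, of t] that s by (force simp: B_def s_def)
  have "v s \<le> T"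
  proof (rule DERIV_nonpos_above_imp_le[where f = v and f' = "\<lambda>t. K * (w t - v t) / t"])
    show "y0 \<le> s" "v y0 \<le> T"
      using s y0 by auto
  next
    fix t assume "y0 \<le> t" "t \<le> s"
    then show "(v has_real_derivative K * (w t - v t) / t) (at t)"
      using assms by (intro v_deriv) auto
  next
    fix t assume t: "y0 < t" "t < s"
    then have "w t - v t < 0"
      using before_s[of t] \<open>0 < \<eta>\<close> by (simp add: g_def)
    then show "K * (w t - v t) / t \<le> 0"
      using t assms A_pos K_pos by (simp add: divide_nonpos_pos mult_pos_neg less_imp_le)
  qed
  then have "\<eta> < \<bar>g s\<bar>"
    using gap[of s] s assms by (simp add: g_def)
  then have "\<eta> < g s"
    using s \<open>0 < \<eta>\<close> by (cases "g s < 0") auto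
  moreover obtain t where t: "y0 \<le> t" "t \<le> s" "g t = 0"
    using IVT'[of g y0 0 s] y0 s \<open>\<eta> < g s\<close> \<open>0 < \<eta>\<close> continuous_on_subset[OF cont, of "{y0..s}"]
    by (force simp: g_def)
  ultimately show False
    using before_s[of t] \<open>0 < \<eta>\<close> by (cases "t = s") auto
qed

lemma above_diagonal_if_gap:
  assumes "A < Y" "0 < \<eta>" and gap: "\<And>y. Y \<le> y \<Longrightarrow> v y \<le> T \<Longrightarrow> \<eta> < \<bar>w y - v y\<bar>"
    and "Y \<le> y" "v y \<le> T"
  shows "\<eta> < w y - v y"
proof (rule ccontr)
  assume "\<not> ?thesis"
  then have "w y - v y < - \<eta>"
    using gap assms by fastforce
  then have "eventually (\<lambda>x. v x \<le> C / 4) at_top"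
    using gap_below_persists[OF \<open>A < Y\<close> \<open>0 < \<eta>\<close> gap] assms C_pos
    by (intro eventually_le_if_gap_below[of y \<eta>]) (auto intro: less_imp_le)
  then obtain x where "v x \<le> C / 4" "C / 2 \<le> v x"
    using eventually_happens'[OF trivial_limit_at_top_linorder eventually_conj[OF _ eventually_ge_half_C]]
    by blast
  then show False
    using C_pos by linarith
qed

lemma eventually_ge_below_equilibrium:
  assumes T: "0 < T" "T powr (p - 1) < 1 / p"
  shows "eventually (\<lambda>y. T \<le> v y) at_top"
proof -
  define m where "m = C / 2"
  define c where "c = m * (1 / p - T powr (p - 1))"
  define D where "D = 1 + 2 * p * (T + 1) powr (p - 1)"
  define \<eta> where "\<eta> = min 1 (c / D)"
  have m: "0 < m" and c: "0 < c" and D: "0 < D"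
    using C_pos T p_gt_1 by (simp_all add: m_def c_def D_def add_pos_nonneg)
  have "(1 / 2 + p * (T + 1) powr (p - 1)) * \<eta> = D / 2 * \<eta>"
    by (simp add: D_def algebra_simps)
  also have "\<dots> \<le> D / 2 * (c / D)"
    using D by (intro mult_left_mono) (auto simp: \<eta>_def)
  finally have \<eta>: "0 < \<eta>" "\<eta> \<le> 1" "(1 / 2 + p * (T + 1) powr (p - 1)) * \<eta> \<le> c / 2"
    using c D by (auto simp: \<eta>_def)
  obtain Y1 where Y1: "A < Y1" "\<And>y. Y1 \<le> y \<Longrightarrow> \<bar>scaled_rhs p (w y) (v y)\<bar> < c / 2"
    using scaled_rhs_eventually_small[of "c / 2"] c by auto
  obtain Y2 where Y2: "\<And>y. Y2 \<le> y \<Longrightarrow> m \<le> v y"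
    using eventually_ge_half_C unfolding m_def eventually_at_top_linorder by blast
  define Y where "Y = max Y1 Y2"
  have Y: "A < Y" "Y1 \<le> Y" "Y2 \<le> Y"
    using Y1 by (auto simp: Y_def)
  have gap: "\<eta> < \<bar>w y - v y\<bar>" if "Y \<le> y" "v y \<le> T" for y
  proof (rule ccontr)
    assume "\<not> ?thesis"
    then have "c / 2 \<le> scaled_rhs p (w y) (v y)"
      using that Y Y2[of y] w_ge_C[of y] C_pos p_gt_1 T m \<eta>
      by (intro scaled_rhs_ge_near_diagonal[of p m "v y" T "w y" \<eta> c, OF _ _ _ _ _ _ _ _ c_def]) auto
    then show False
      using Y1(2)[of y] that Y by auto
  qed
  then show ?thesis
    using Y \<eta> gap above_diagonal_if_gap[OF \<open>A < Y\<close> \<eta>(1)]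
    by (intro eventually_ge_if_gap_above[of Y \<eta>]) (auto intro: less_imp_le)
qed

lemma tendsto_equilibrium: "(v \<longlongrightarrow> p powr (- (1 / (p - 1)))) at_top"
proof -
  define L where "L = p powr (- (1 / (p - 1)))"
  have L: "0 < L" "L powr (p - 1) = 1 / p"
    using p_gt_1 powr_equilibrium by (simp_all add: L_def)
  have "(v \<longlongrightarrow> L) at_top"
  proof (rule order_tendstoI)
    fix a assume "a < L"
    define T where "T = max ((a + L) / 2) (L / 2)"
    have T: "0 < T" "a < T" "T < L"
      using \<open>a < L\<close> L by (auto simp: T_def less_max_iff_disj)
    then have "T powr (p - 1) < L powr (p - 1)"
      using p_gt_1 by (intro powr_less_mono2) auto
    then show "eventually (\<lambda>y. a < v y) at_top"
      using eventually_ge_below_equilibrium[OF \<open>0 < T\<close>] \<open>a < T\<close> L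
      by (auto elim: eventually_mono)
  next
    fix a assume "L < a"
    define T where "T = (a + L) / 2"
    have T: "0 < T" "L < T" "T < a"
      using \<open>L < a\<close> L by (auto simp: T_def)
    then have "L powr (p - 1) < T powr (p - 1)"
      using p_gt_1 L by (intro powr_less_mono2) auto
    then show "eventually (\<lambda>y. v y < a) at_top"
      using eventually_le_above_equilibrium[OF \<open>0 < T\<close>] \<open>T < a\<close> L
      by (auto elim: eventually_mono)
  qed
  then show ?thesis
    by (simp add: L_def)
qed

end

lemma ode_solution_rescaled_profile:
  fixes p A C \<sigma> :: real and \<phi> \<phi>' \<phi>'' :: "real \<Rightarrow> real"
  defines "\<beta> \<equiv> 1 / (p - 1)"
  assumes p: "1 < p" and sigma: "\<sigma> \<in> {-1, 1}" and A: "0 < A" and C: "0 < C"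
    and d1: "\<And>y. A < y \<Longrightarrow> (\<phi> has_real_derivative \<phi>' y) (at y)"
    and d2: "\<And>y. A < y \<Longrightarrow> (\<phi>' has_real_derivative \<phi>'' y) (at y)"
    and ode: "\<And>y. A < y \<Longrightarrow>
       \<sigma> * \<phi>'' y = 1 / 2 * y * \<phi>' y - (p - 2) / (2 * (p - 1)) * \<phi> y - \<bar>\<phi>' y\<bar> powr p"
    and lower: "\<And>y. A < y \<Longrightarrow> C * y powr \<beta> \<le> \<phi>' y"
    and small: "((\<lambda>y. \<bar>\<phi>'' y\<bar> / y powr (\<beta> + 1)) \<longlongrightarrow> 0) at_top"
  shows "rescaled_profile p (\<beta> + 1) A C
           (\<lambda>y. (\<beta> + 1) * \<phi> y / y powr (\<beta> + 1)) (\<lambda>y. \<phi>' y / y powr \<beta>)"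
proof
  have "0 < \<beta>"
    using p by (simp add: \<beta>_def)
  then show "1 < p" "0 < A" "0 < C" "0 < \<beta> + 1"
    using p A C by simp_all
  fix y assume "A < y"
  then show "((\<lambda>y. (\<beta> + 1) * \<phi> y / y powr (\<beta> + 1)) has_real_derivative
      (\<beta> + 1) * (\<phi>' y / y powr \<beta> - (\<beta> + 1) * \<phi> y / y powr (\<beta> + 1)) / y) (at y)"
    using A d1 by (intro has_real_derivative_rescaled) auto
  show "C \<le> \<phi>' y / y powr \<beta>"
    using lower[OF \<open>A < y\<close>] A \<open>A < y\<close> by (simp add: pos_le_divide_eq)
next
  show "continuous_on {A<..} (\<lambda>y. \<phi>' y / y powr \<beta>)"
  proof (intro continuous_at_imp_continuous_on ballI)
    fix y assume "y \<in> {A<..}"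
    then have "0 < y" "isCont \<phi>' y"
      using A d2 DERIV_isCont by auto
    then show "isCont (\<lambda>y. \<phi>' y / y powr \<beta>) y"
      by (intro isCont_divide DERIV_isCont[OF has_real_derivative_powr]) auto
  qed
next
  have rhs: "scaled_rhs p (\<phi>' y / y powr \<beta>) ((\<beta> + 1) * \<phi> y / y powr (\<beta> + 1)) = \<sigma> * \<phi>'' y / y powr (\<beta> + 1)"
    if "A < y" for y
  proof -
    have "0 \<le> C * y powr \<beta>"
      using C by simp
    then have "0 \<le> \<phi>' y"
      using lower[OF that] by linarith
    then show ?thesis
      using that A p by (simp add: scaled_rhs_rescale \<beta>_def ode)
  qed
  have "\<bar>\<sigma>\<bar> = 1"
    using sigma by auto
  then have "(\<lambda>y. \<bar>\<sigma> * \<phi>'' y / y powr (\<beta> + 1)\<bar>) = (\<lambda>y. \<bar>\<phi>'' y\<bar> / y powr (\<beta> + 1))"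
    by (simp add: abs_mult abs_divide)
  then have "((\<lambda>y. \<sigma> * \<phi>'' y / y powr (\<beta> + 1)) \<longlongrightarrow> 0) at_top"
    using small tendsto_rabs_zero_iff[of "\<lambda>y. \<sigma> * \<phi>'' y / y powr (\<beta> + 1)" at_top] by simp
  moreover have "eventually (\<lambda>y. \<sigma> * \<phi>'' y / y powr (\<beta> + 1)
      = scaled_rhs p (\<phi>' y / y powr \<beta>) ((\<beta> + 1) * \<phi> y / y powr (\<beta> + 1))) at_top"
    using eventually_gt_at_top[of A] by eventually_elim (simp add: rhs)
  ultimately show "((\<lambda>y. scaled_rhs p (\<phi>' y / y powr \<beta>) ((\<beta> + 1) * \<phi> y / y powr (\<beta> + 1))) \<longlongrightarrow> 0) at_top"
    by (rule Lim_transform_eventually)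
qed

theorem lemma7p5:
  fixes p A C \<sigma> :: real and \<phi> \<phi>' \<phi>'' :: "real \<Rightarrow> real"
  assumes p: "p > 1"
    and sigma: "\<sigma> \<in> {-1, 1}"
    and A: "A > 0"
    and d1: "\<And>y. y \<ge> A \<Longrightarrow> (\<phi> has_real_derivative \<phi>' y) (at y within {A..})"
    and d2: "\<And>y. y \<ge> A \<Longrightarrow> (\<phi>' has_real_derivative \<phi>'' y) (at y within {A..})"
    and cont2: "continuous_on {A..} \<phi>''"
    and ode: "\<And>y. y \<ge> A \<Longrightarrow>
       \<sigma> * \<phi>'' y = (1/2) * y * \<phi>' y - ((p - 2) / (2 * (p - 1))) * \<phi> y - \<bar>\<phi>' y\<bar> powr p"
    and C: "C > 0"
    and lower: "\<And>y. y \<ge> A \<Longrightarrow> \<phi>' y \<ge> C * y powr (1 / (p - 1))"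
    and small: "((\<lambda>y. \<bar>\<phi>'' y\<bar> / y powr (1 / (p - 1) + 1)) \<longlongrightarrow> 0) at_top"
  shows "((\<lambda>y. \<phi> y / y powr (1 / (p - 1) + 1)) \<longlongrightarrow> p powr (- (1 / (p - 1))) / (1 / (p - 1) + 1)) at_top"
proof -
  define K where "K = 1 / (p - 1) + 1"
  have K: "0 < K"
    using p by (simp add: K_def add_pos_pos)
  have at: "at y within {A..} = at y" if "A < y" for y
    using that by (intro at_within_interior) (simp add: interior_Ici[of "A - 1"])
  have "rescaled_profile p K A C (\<lambda>y. K * \<phi> y / y powr K) (\<lambda>y. \<phi>' y / y powr (1 / (p - 1)))"
    unfolding K_def
  proof (rule ode_solution_rescaled_profile[OF p sigma A C])
    fix y assume "A < y"
    then show "(\<phi> has_real_derivative \<phi>' y) (at y)" "(\<phi>' has_real_derivative \<phi>'' y) (at y)"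
      using d1[of y] d2[of y] at[of y] by simp_all
  qed (use ode lower small in auto)
  then have "((\<lambda>y. K * \<phi> y / y powr K / K) \<longlongrightarrow> p powr (- (1 / (p - 1))) / K) at_top"
    by (intro tendsto_divide rescaled_profile.tendsto_equilibrium tendsto_const) (use K in auto)
  then show ?thesis
    using K by (simp add: K_def)
qed

end
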